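(* Let $G$ and $H$ be finite groups, $\varphi:H\to G$ a group homomorphism, and $X$ a smooth projective complex $G$-variety, regarded as an $H$-variety via $\varphi$. Then the kernel of the induced homomorphism $\operatorname{Am}(X,G)\to\operatorname{Am}(X,H)$ is the set of classes $\partial_G[\mathcal{L}]$ where $\mathcal{L}$ is a $G$-invariant line bundle on $X$ such that $\varphi$ factors through the projection $G_{\mathcal{L}}\to G$ (i.e. there is a homomorphism $\psi:H\to G_{\mathcal{L}}$ whose composite with $G_{\mathcal{L}}\to G$ equals $\varphi$).
   Context: Actions need not be faithful. For a $G$-invariant line bundle $\mathcal{L}$, the lifting group $G_{\mathcal{L}}$ is the group of all isomorphisms of the total space of $\mathcal{L}$, linear on fibers, lifting some element of $G$; it is a central extension $1\to\mathbb{C}^\times\to G_{\mathcal{L}}\to G\to1$ with class $\partial_G[\mathcal{L}]\in H^2(G,\mathbb{C}^\times)$. $\operatorname{Am}(X,G):=\partial_G(\operatorname{Pic}(X)^G)$. The induced homomorphism $\operatorname{Am}(X,G)\to\operatorname{Am}(X,H)$ is the restriction of $\varphi^\ast:H^2(G,\mathbb{C}^\times)\to H^2(H,\mathbb{C}^\times)$ (pullback of extensions along $\varphi$), sending $\partial_G[\mathcal{L}]$ to $\partial_H[\mathcal{L}]$. *)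

theory Defs
  imports Complex_Main "HOL-Algebra.Group"
begin

text \<open>Group cohomology H^2(G, C^x) with trivial action, via normalised-free
  2-cocycles modulo coboundaries.\<close>

definition cocycle2 :: "('g, 'm) monoid_scheme \<Rightarrow> ('g \<Rightarrow> 'g \<Rightarrow> complex) \<Rightarrow> bool" where
  "cocycle2 G c \<longleftrightarrow>
     (\<forall>x\<in>carrier G. \<forall>y\<in>carrier G. c x y \<noteq> 0) \<and>
     (\<forall>x\<in>carrier G. \<forall>y\<in>carrier G. \<forall>z\<in>carrier G.
        c x y * c (x \<otimes>\<^bsub>G\<^esub> y) z = c y z * c x (y \<otimes>\<^bsub>G\<^esub> z))"

definition cohomologous :: "('g, 'm) monoid_scheme \<Rightarrow> ('g \<Rightarrow> 'g \<Rightarrow> complex) \<Rightarrow> ('g \<Rightarrow> 'g \<Rightarrow> complex) \<Rightarrow> bool" where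
  "cohomologous G c d \<longleftrightarrow>
     (\<exists>f. (\<forall>x\<in>carrier G. f x \<noteq> 0) \<and>
          (\<forall>x\<in>carrier G. \<forall>y\<in>carrier G. d x y = c x y * f x * f y / f (x \<otimes>\<^bsub>G\<^esub> y)))"

definition H2class :: "('g, 'm) monoid_scheme \<Rightarrow> ('g \<Rightarrow> 'g \<Rightarrow> complex) \<Rightarrow> ('g \<Rightarrow> 'g \<Rightarrow> complex) set" where
  "H2class G c = {d. cocycle2 G d \<and> cohomologous G c d}"

definition pullback2 :: "('h \<Rightarrow> 'g) \<Rightarrow> ('g \<Rightarrow> 'g \<Rightarrow> complex) \<Rightarrow> ('h \<Rightarrow> 'h \<Rightarrow> complex)" where
  "pullback2 \<phi> c = (\<lambda>x y. c (\<phi> x) (\<phi> y))"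

definition H2pull :: "('h, 'n) monoid_scheme \<Rightarrow> ('h \<Rightarrow> 'g) \<Rightarrow> ('g \<Rightarrow> 'g \<Rightarrow> complex) set \<Rightarrow> ('h \<Rightarrow> 'h \<Rightarrow> complex) set" where
  "H2pull H \<phi> x = H2class H (pullback2 \<phi> (SOME c. c \<in> x))"

text \<open>Am(X,G) = \<partial>_G(Pic(X)^G): the classes of the cocycles in S, where S is the
  set of cocycles representing \<partial>_G[L] for the G-invariant line bundles L.\<close>
definition Am :: "('g, 'm) monoid_scheme \<Rightarrow> ('g \<Rightarrow> 'g \<Rightarrow> complex) set \<Rightarrow> ('g \<Rightarrow> 'g \<Rightarrow> complex) set set" where
  "Am G S = H2class G ` S"

text \<open>The central extension 1 \<rightarrow> C^x \<rightarrow> G_c \<rightarrow> G \<rightarrow> 1 of class [c]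
  (the lifting group), projection = fst.\<close>
definition twisted_ext :: "('g, 'm) monoid_scheme \<Rightarrow> ('g \<Rightarrow> 'g \<Rightarrow> complex) \<Rightarrow> ('g \<times> complex) monoid" where
  "twisted_ext G c =
     \<lparr>carrier = carrier G \<times> {z. z \<noteq> 0},
      mult = (\<lambda>(g, a) (h, b). (g \<otimes>\<^bsub>G\<^esub> h, a * b * c g h)),
      one = (\<one>\<^bsub>G\<^esub>, 1 / c \<one>\<^bsub>G\<^esub> \<one>\<^bsub>G\<^esub>)\<rparr>"

end

theory Submission
  imports Defs
begin

text \<open>A lift of \<open>\<phi>\<close> to the twisted product has the form \<open>h \<mapsto> (\<phi> h, f h)\<close>, and
  the homomorphism condition for it reads \<open>f (x y) = f x f y c (\<phi> x) (\<phi> y)\<close>: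
  precisely that \<open>f\<close> trivialises the pulled-back cocycle.  Hence \<open>\<phi>\<close> lifts
  exactly when \<open>\<phi>\<^sup>*[c]\<close> is trivial, which describes the kernel of
  \<open>Am(X,G) \<rightarrow> Am(X,H)\<close>.\<close>

lemma cohomologous_refl: "cohomologous G c c"
  unfolding cohomologous_def by (rule exI[of _ "\<lambda>_. 1"]) simp

lemma cohomologous_sym:
  assumes "monoid G" "cohomologous G c d"
  shows "cohomologous G d c"
proof -
  obtain f where f: "\<forall>x\<in>carrier G. f x \<noteq> 0"
    "\<forall>x\<in>carrier G. \<forall>y\<in>carrier G. d x y = c x y * f x * f y / f (x \<otimes>\<^bsub>G\<^esub> y)"
    using assms(2) unfolding cohomologous_def by blast
  show ?thesis unfolding cohomologous_def
  proof (rule exI[of _ "\<lambda>x. 1 / f x"], intro conjI ballI)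
    fix x assume "x \<in> carrier G"
    then show "1 / f x \<noteq> 0" using f by simp
  next
    fix x y assume xy: "x \<in> carrier G" "y \<in> carrier G"
    then have "f x \<noteq> 0" "f y \<noteq> 0" "f (x \<otimes>\<^bsub>G\<^esub> y) \<noteq> 0"
      using f(1) monoid.m_closed[OF assms(1)] by auto
    then show "c x y = d x y * (1 / f x) * (1 / f y) / (1 / f (x \<otimes>\<^bsub>G\<^esub> y))"
      using f(2) xy by (simp add: field_simps)
  qed
qed

lemma cohomologous_trans:
  assumes "monoid G" "cohomologous G c d" "cohomologous G d e"
  shows "cohomologous G c e"
proof -
  obtain f where f: "\<forall>x\<in>carrier G. f x \<noteq> 0"
    "\<forall>x\<in>carrier G. \<forall>y\<in>carrier G. d x y = c x y * f x * f y / f (x \<otimes>\<^bsub>G\<^esub> y)"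
    using assms(2) unfolding cohomologous_def by blast
  obtain g where g: "\<forall>x\<in>carrier G. g x \<noteq> 0"
    "\<forall>x\<in>carrier G. \<forall>y\<in>carrier G. e x y = d x y * g x * g y / g (x \<otimes>\<^bsub>G\<^esub> y)"
    using assms(3) unfolding cohomologous_def by blast
  show ?thesis unfolding cohomologous_def
  proof (rule exI[of _ "\<lambda>x. f x * g x"], intro conjI ballI)
    fix x assume "x \<in> carrier G"
    then show "f x * g x \<noteq> 0" using f g by simp
  next
    fix x y assume xy: "x \<in> carrier G" "y \<in> carrier G"
    then have "f (x \<otimes>\<^bsub>G\<^esub> y) \<noteq> 0" "g (x \<otimes>\<^bsub>G\<^esub> y) \<noteq> 0"
      using f(1) g(1) monoid.m_closed[OF assms(1)] by auto
    then show "e x y = c x y * (f x * g x) * (f y * g y) / (f (x \<otimes>\<^bsub>G\<^esub> y) * g (x \<otimes>\<^bsub>G\<^esub> y))"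
      using f(2) g(2) xy by (simp add: field_simps)
  qed
qed

lemma cohomologous_pullback2:
  assumes "\<phi> \<in> hom H G" "cohomologous G c d"
  shows "cohomologous H (pullback2 \<phi> c) (pullback2 \<phi> d)"
proof -
  obtain f where f: "\<forall>x\<in>carrier G. f x \<noteq> 0"
    "\<forall>x\<in>carrier G. \<forall>y\<in>carrier G. d x y = c x y * f x * f y / f (x \<otimes>\<^bsub>G\<^esub> y)"
    using assms(2) unfolding cohomologous_def by blast
  then show ?thesis
    unfolding cohomologous_def pullback2_def
    using hom_in_carrier[OF assms(1)] hom_mult[OF assms(1)]
    by (intro exI[of _ "f \<circ> \<phi>"]) auto
qed

lemma cocycle2_pullback2:
  assumes "monoid H" "\<phi> \<in> hom H G" "cocycle2 G c"
  shows "cocycle2 H (pullback2 \<phi> c)"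
  using assms(3) hom_in_carrier[OF assms(2)] hom_mult[OF assms(2)] monoid.m_closed[OF assms(1)]
  unfolding cocycle2_def pullback2_def by auto

lemma cocycle2_const_one: "cocycle2 H (\<lambda>_ _. 1)"
  unfolding cocycle2_def by simp

lemma H2class_eq_iff:
  assumes "monoid H" "cocycle2 H e'"
  shows "H2class H e = H2class H e' \<longleftrightarrow> cohomologous H e e'"
proof
  assume "H2class H e = H2class H e'"
  moreover have "e' \<in> H2class H e'"
    using assms(2) cohomologous_refl unfolding H2class_def by blast
  ultimately show "cohomologous H e e'" unfolding H2class_def by blast
next
  assume "cohomologous H e e'"
  then show "H2class H e = H2class H e'" unfolding H2class_def
    using cohomologous_sym[OF assms(1)] cohomologous_trans[OF assms(1)] by blast
qed

lemma H2pull_H2class: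
  assumes "monoid H" "\<phi> \<in> hom H G" "cocycle2 G c"
  shows "H2pull H \<phi> (H2class G c) = H2class H (pullback2 \<phi> c)"
proof -
  define d where "d = (SOME d. d \<in> H2class G c)"
  have "c \<in> H2class G c"
    using assms(3) cohomologous_refl unfolding H2class_def by blast
  then have "d \<in> H2class G c"
    unfolding d_def by (rule someI[of "\<lambda>d. d \<in> H2class G c"])
  then have "cohomologous H (pullback2 \<phi> c) (pullback2 \<phi> d)"
    using cohomologous_pullback2[OF assms(2)] unfolding H2class_def by blast
  then have "cohomologous H (pullback2 \<phi> d) (pullback2 \<phi> c)"
    by (rule cohomologous_sym[OF assms(1)])
  then have "H2class H (pullback2 \<phi> d) = H2class H (pullback2 \<phi> c)"
    using H2class_eq_iff[OF assms(1) cocycle2_pullback2[OF assms]] by blast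
  then show ?thesis unfolding H2pull_def d_def .
qed

lemma hom_lift_twisted_ext_iff:
  assumes "monoid H" "\<phi> \<in> hom H G"
  shows "(\<exists>\<psi> \<in> hom H (twisted_ext G c). \<forall>h\<in>carrier H. fst (\<psi> h) = \<phi> h) \<longleftrightarrow>
         cohomologous H (pullback2 \<phi> c) (\<lambda>_ _. 1)"
proof
  assume "\<exists>\<psi> \<in> hom H (twisted_ext G c). \<forall>h\<in>carrier H. fst (\<psi> h) = \<phi> h"
  then obtain \<psi> where \<psi>: "\<psi> \<in> hom H (twisted_ext G c)" "\<forall>h\<in>carrier H. \<psi> h = (\<phi> h, snd (\<psi> h))"
    by (metis prod.collapse)
  have nonzero: "snd (\<psi> x) \<noteq> 0" if "x \<in> carrier H" for x
    using hom_in_carrier[OF \<psi>(1) that] by (auto simp: twisted_ext_def)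
  have mult: "snd (\<psi> (x \<otimes>\<^bsub>H\<^esub> y)) = snd (\<psi> x) * snd (\<psi> y) * c (\<phi> x) (\<phi> y)"
    if "x \<in> carrier H" "y \<in> carrier H" for x y
  proof -
    have "\<psi> (x \<otimes>\<^bsub>H\<^esub> y) = (\<phi> x, snd (\<psi> x)) \<otimes>\<^bsub>twisted_ext G c\<^esub> (\<phi> y, snd (\<psi> y))"
      using hom_mult[OF \<psi>(1) that] \<psi>(2) that by simp
    then show ?thesis by (simp add: twisted_ext_def)
  qed
  show "cohomologous H (pullback2 \<phi> c) (\<lambda>_ _. 1)"
    unfolding cohomologous_def pullback2_def
  proof (intro exI[of _ "snd \<circ> \<psi>"] conjI ballI)
    fix x assume "x \<in> carrier H"
    then show "(snd \<circ> \<psi>) x \<noteq> 0" using nonzero by simp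
  next
    fix x y assume xy: "x \<in> carrier H" "y \<in> carrier H"
    then have "snd (\<psi> (x \<otimes>\<^bsub>H\<^esub> y)) \<noteq> 0"
      using nonzero monoid.m_closed[OF assms(1)] by blast
    then show "1 = c (\<phi> x) (\<phi> y) * (snd \<circ> \<psi>) x * (snd \<circ> \<psi>) y / (snd \<circ> \<psi>) (x \<otimes>\<^bsub>H\<^esub> y)"
      using mult[OF xy] by simp
  qed
next
  assume "cohomologous H (pullback2 \<phi> c) (\<lambda>_ _. 1)"
  then obtain f where f: "\<forall>x\<in>carrier H. f x \<noteq> 0"
    "\<forall>x\<in>carrier H. \<forall>y\<in>carrier H. 1 = c (\<phi> x) (\<phi> y) * f x * f y / f (x \<otimes>\<^bsub>H\<^esub> y)"
    unfolding cohomologous_def pullback2_def by blast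
  have "f (x \<otimes>\<^bsub>H\<^esub> y) = f x * f y * c (\<phi> x) (\<phi> y)" if "x \<in> carrier H" "y \<in> carrier H" for x y
    using f monoid.m_closed[OF assms(1) that] that by (auto simp: field_simps)
  then have "(\<lambda>h. (\<phi> h, f h)) \<in> hom H (twisted_ext G c)"
    using f(1) hom_in_carrier[OF assms(2)] hom_mult[OF assms(2)]
    by (auto simp: hom_def twisted_ext_def)
  then show "\<exists>\<psi> \<in> hom H (twisted_ext G c). \<forall>h\<in>carrier H. fst (\<psi> h) = \<phi> h"
    by force
qed

theorem proposition2p13:
  fixes G :: "('g, 'a) monoid_scheme" and H :: "('h, 'b) monoid_scheme"
    and \<phi> :: "'h \<Rightarrow> 'g" and S :: "('g \<Rightarrow> 'g \<Rightarrow> complex) set"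
  assumes "group G" and "group H"
    and "finite (carrier G)" and "finite (carrier H)"
    and "\<phi> \<in> hom H G"
    and "\<forall>c\<in>S. cocycle2 G c"
  shows "{x \<in> Am G S. H2pull H \<phi> x = H2class H (\<lambda>_ _. 1)} =
         {H2class G c | c. c \<in> S \<and>
            (\<exists>\<psi> \<in> hom H (twisted_ext G c). \<forall>h\<in>carrier H. fst (\<psi> h) = \<phi> h)}"
proof -
  have H: "monoid H" using assms(2) by (rule group.is_monoid)
  have "H2pull H \<phi> (H2class G c) = H2class H (\<lambda>_ _. 1) \<longleftrightarrow>
        (\<exists>\<psi> \<in> hom H (twisted_ext G c). \<forall>h\<in>carrier H. fst (\<psi> h) = \<phi> h)"
    if "c \<in> S" for c
    using H2pull_H2class[OF H assms(5)] H2class_eq_iff[OF H cocycle2_const_one]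
      hom_lift_twisted_ext_iff[OF H assms(5)] assms(6) that
    by simp
  then show ?thesis unfolding Am_def by auto
qed

end
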